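(* Let $f:\mathbb R^n\to\mathbb R$ be an integrable log-concave function with full-dimensional support. Then for any $t\in(0,1)$ and any $x\in\mathrm{supp}\,f-\mathrm{supp}\,f$, $$\mathcal A_t(f)(x)\subseteq\tfrac12x+\mathcal A_t(f)(0).$$ Consequently, $M_t(f)=|\mathcal A_t(f)(0)|$.
   Context: Let $\bar f(x)=f(-x)$. For $t\in(0,1]$ and $x\in\mathrm{supp}\,f-\mathrm{supp}\,f$, $\mathcal A_t(f)(x)=\{z\in\mathrm{supp}\,f\cap(x+\mathrm{supp}\,f): f(z)f(z-x)\geq t\Vert f\Vert_\infty^2\}$ (so $\mathcal A_t(f)(0)=\{z: f(z)\geq\sqrt t\Vert f\Vert_\infty\}$), and $M_t(f)=\max_{x_0\in\mathrm{supp}\,f-\mathrm{supp}\,f}|\mathcal A_t(f)(x_0)|$, with $|\cdot|$ Lebesgue volume. *)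

theory Defs
  imports "HOL-Analysis.Analysis"
begin

definition log_concave :: "('a::real_vector \<Rightarrow> real) \<Rightarrow> bool" where
  "log_concave f \<longleftrightarrow> (\<forall>x. f x \<ge> 0) \<and>
     (\<forall>x y (l::real). 0 < l \<and> l < 1 \<longrightarrow>
        f ((1 - l) *\<^sub>R x + l *\<^sub>R y) \<ge> f x powr (1 - l) * f y powr l)"

definition supp :: "('a \<Rightarrow> real) \<Rightarrow> 'a set" where
  "supp f = {x. f x > 0}"

definition sup_norm :: "('a \<Rightarrow> real) \<Rightarrow> real" where
  "sup_norm f = (SUP x. \<bar>f x\<bar>)"

definition A_set :: "real \<Rightarrow> ('a::real_vector \<Rightarrow> real) \<Rightarrow> 'a \<Rightarrow> 'a set" where
  "A_set t f x = {z \<in> supp f \<inter> ((\<lambda>w. x + w) ` supp f).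
                   f z * f (z - x) \<ge> t * (sup_norm f)\<^sup>2}"

definition M_t :: "real \<Rightarrow> ('a::euclidean_space \<Rightarrow> real) \<Rightarrow> ennreal" where
  "M_t t f = (SUP x0 \<in> {a - b | a b. a \<in> supp f \<and> b \<in> supp f}.
                 emeasure lebesgue (A_set t f x0))"

end

theory Submission
  imports Defs
begin

text \<open>If \<open>z\<close> and \<open>z - x\<close> both lie in the support, log-concavity at their midpoint
  \<open>w = z - x/2\<close> gives \<open>f w\<^sup>2 \<ge> f z f (z - x)\<close>, so \<open>z - x/2 \<in> \<A>\<^sub>t(f)(0)\<close>.
  Hence every \<open>\<A>\<^sub>t(f)(x)\<close> sits inside a translate of \<open>\<A>\<^sub>t(f)(0)\<close>, and translation
  invariance of Lebesgue measure shows the maximum defining \<open>M\<^sub>t(f)\<close> is attained at \<open>x = 0\<close>.\<close>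

lemma log_concave_nonneg: "log_concave f \<Longrightarrow> 0 \<le> f x"
  by (simp add: log_concave_def)

lemma log_concave_midpoint:
  assumes "log_concave f"
  shows "f x * f y \<le> (f (midpoint x y))\<^sup>2"
proof -
  have "\<forall>x y l. 0 < l \<and> l < 1 \<longrightarrow> f x powr (1 - l) * f y powr l \<le> f ((1 - l) *\<^sub>R x + l *\<^sub>R y)"
    using assms unfolding log_concave_def by blast
  from this[rule_format, of "1/2" x y]
  have "f x powr (1 - 1/2) * f y powr (1/2) \<le> f ((1 - 1/2) *\<^sub>R x + (1/2) *\<^sub>R y)"
    by simp
  moreover have "(1 - 1/2) *\<^sub>R x + (1/2) *\<^sub>R y = midpoint x y"
    by (simp add: midpoint_def scaleR_add_right)
  ultimately have "f x powr (1/2) * f y powr (1/2) \<le> f (midpoint x y)"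
    by simp
  then have sqrt_le: "sqrt (f x) * sqrt (f y) \<le> f (midpoint x y)"
    using log_concave_nonneg[OF assms] by (simp add: powr_half_sqrt)
  have "f x * f y = (sqrt (f x) * sqrt (f y))\<^sup>2"
    using log_concave_nonneg[OF assms] by (simp add: power_mult_distrib)
  also have "\<dots> \<le> (f (midpoint x y))\<^sup>2"
    using sqrt_le log_concave_nonneg[OF assms] by (intro power_mono) auto
  finally show ?thesis .
qed

lemma A_set_subset_translate_A_set_zero:
  assumes "log_concave f"
  shows "A_set t f x \<subseteq> (\<lambda>z. (1/2) *\<^sub>R x + z) ` A_set t f 0"
proof
  fix z assume "z \<in> A_set t f x"
  then have pos: "0 < f z" "0 < f (z - x)" and big: "t * (sup_norm f)\<^sup>2 \<le> f z * f (z - x)"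
    by (auto simp: A_set_def supp_def)
  define w where "w = midpoint z (z - x)"
  have w_eq: "w = z - (1/2) *\<^sub>R x"
    unfolding w_def midpoint_def by (simp add: algebra_simps flip: scaleR_add_left)
  have mid: "f z * f (z - x) \<le> (f w)\<^sup>2"
    unfolding w_def by (rule log_concave_midpoint[OF assms])
  then have "0 < f w"
    using mult_pos_pos[OF pos] log_concave_nonneg[OF assms, of w]
    by (smt (verit) mult_eq_0_iff power2_eq_square)
  with big mid have "w \<in> A_set t f 0"
    by (auto simp: A_set_def supp_def power2_eq_square)
  moreover have "z = (1/2) *\<^sub>R x + w"
    by (simp add: w_eq)
  ultimately show "z \<in> (\<lambda>z. (1/2) *\<^sub>R x + z) ` A_set t f 0"
    by blast
qed

lemma emeasure_lebesgue_translation: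
  fixes a :: "'a::euclidean_space"
  shows "emeasure lebesgue ((\<lambda>z. a + z) ` S) = emeasure lebesgue S"
  using emeasure_lebesgue_affine[of 1 a S] by (simp add: add.commute cong: image_cong_simp)

lemma A_set_zero_sets_lebesgue:
  fixes f :: "'a::euclidean_space \<Rightarrow> real"
  assumes "f \<in> borel_measurable lebesgue"
  shows "A_set t f 0 \<in> sets lebesgue"
proof -
  have "A_set t f 0 = {z \<in> space lebesgue. 0 < f z \<and> t * (sup_norm f)\<^sup>2 \<le> f z * f z}"
    by (auto simp: A_set_def supp_def)
  also have "\<dots> \<in> sets lebesgue"
    using assms by measurable
  finally show ?thesis .
qed

lemma emeasure_A_set_le_A_set_zero:
  fixes f :: "'a::euclidean_space \<Rightarrow> real"
  assumes "log_concave f" and "f \<in> borel_measurable lebesgue"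
  shows "emeasure lebesgue (A_set t f x) \<le> emeasure lebesgue (A_set t f 0)"
proof -
  have "emeasure lebesgue (A_set t f x) \<le> emeasure lebesgue ((\<lambda>z. (1/2) *\<^sub>R x + z) ` A_set t f 0)"
    using A_set_subset_translate_A_set_zero[OF assms(1)]
      lebesgue_sets_translation[OF A_set_zero_sets_lebesgue[OF assms(2)]]
    by (rule emeasure_mono)
  also have "\<dots> = emeasure lebesgue (A_set t f 0)"
    by (rule emeasure_lebesgue_translation)
  finally show ?thesis .
qed

theorem lemma3p6:
  fixes f :: "'a::euclidean_space \<Rightarrow> real"
  assumes "log_concave f"
    and "integrable lebesgue f"
    and "interior (supp f) \<noteq> {}"
  shows "(\<forall>t x. 0 < t \<and> t < 1 \<and> x \<in> {a - b | a b. a \<in> supp f \<and> b \<in> supp f} \<longrightarrow>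
            A_set t f x \<subseteq> (\<lambda>z. (1/2) *\<^sub>R x + z) ` A_set t f 0)
       \<and> (\<forall>t. 0 < t \<and> t < 1 \<longrightarrow> M_t t f = emeasure lebesgue (A_set t f 0))"
proof -
  have measurable: "f \<in> borel_measurable lebesgue"
    using assms(2) by auto
  obtain p where "p \<in> supp f"
    using assms(3) interior_subset by blast
  then have zero_diff: "0 \<in> {a - b | a b. a \<in> supp f \<and> b \<in> supp f}"
    by (auto intro!: exI[of _ p])
  have "M_t t f = emeasure lebesgue (A_set t f 0)" for t
    unfolding M_t_def
    by (intro antisym SUP_least SUP_upper2[OF zero_diff] order_refl
        emeasure_A_set_le_A_set_zero[OF assms(1) measurable])
  then show ?thesis
    using A_set_subset_translate_A_set_zero[OF assms(1)] by blast
qed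

end
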